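(* Let $\mu,\nu\in\mathbb{R}$ and let $U_\tau=U_\tau(so_{\mu,\nu}(2,2))$ with coproduct $\Delta$ be as described in the context. Define $$\mathcal{H}=\frac{e^{\tau H}-1}{\tau},\quad \mathcal{P}=P,\quad \mathcal{K}=K,\quad \mathcal{D}=D,\quad \mathcal{C}_1=C_1-\tau\nu D^2,\quad \mathcal{C}_2=C_2.$$ Then these elements satisfy the undeformed relations $[\mathcal K,\mathcal H]=\nu\mathcal P$, $[\mathcal K,\mathcal P]=\mu\mathcal H$, $[\mathcal H,\mathcal P]=0$, $[\mathcal D,\mathcal H]=\mathcal H$, $[\mathcal D,\mathcal C_1]=-\mathcal C_1$, $[\mathcal H,\mathcal C_1]=-2\nu\mathcal D$, $[\mathcal D,\mathcal P]=\mathcal P$, $[\mathcal D,\mathcal C_2]=-\mathcal C_2$, $[\mathcal P,\mathcal C_2]=2\mu\mathcal D$, $[\mathcal K,\mathcal C_1]=\nu\mathcal C_2$, $[\mathcal K,\mathcal C_2]=\mu\mathcal C_1$, $[\mathcal K,\mathcal D]=0$, $[\mathcal H,\mathcal C_2]=2\mathcal K$, $[\mathcal P,\mathcal C_1]=-2\mathcal K$, $[\mathcal C_1,\mathcal C_2]=0$, and their coproducts are $$\Delta(\mathcal H)=1\otimes\mathcal H+\mathcal H\otimes 1+\tau\mathcal H\otimes\mathcal H,\qquad \Delta(\mathcal P)=1\otimes\mathcal P+\mathcal P\otimes 1+\tau\mathcal P\otimes\mathcal H,$$ $$\Delta(\mathcal D)=1\otimes\mathcal D+\mathcal D\otimes\frac{1}{1+\tau\mathcal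 H},\qquad \Delta(\mathcal K)=1\otimes\mathcal K+\mathcal K\otimes 1-\tau\nu\,\mathcal D\otimes\frac{\mathcal P}{1+\tau\mathcal H},$$ $$\Delta(\mathcal C_1)=1\otimes\mathcal C_1+\mathcal C_1\otimes\frac{1}{1+\tau\mathcal H}-2\tau\nu\,\mathcal D\otimes\frac{1}{1+\tau\mathcal H}\mathcal D+\tau\nu(\mathcal D^2+\mathcal D)\otimes\frac{\tau\mathcal H}{(1+\tau\mathcal H)^2},$$ $$\Delta(\mathcal C_2)=1\otimes\mathcal C_2+\mathcal C_2\otimes\frac{1}{1+\tau\mathcal H}+2\tau\,\mathcal D\otimes\frac{1}{1+\tau\mathcal H}\mathcal K-\tau^2\nu(\mathcal D^2+\mathcal D)\otimes\frac{\mathcal P}{(1+\tau\mathcal H)^2}.$$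
   Context: $U_\tau(so_{\mu,\nu}(2,2))$ denotes the $\tau$-adically completed associative algebra over $\mathbb{R}[[\tau]]$ generated by $H,P,K,D,C_1,C_2$ subject to the relations $[K,H]=\nu e^{-\tau H}P$, $[K,P]=\mu\frac{e^{\tau H}-1}{\tau}$, $[H,P]=0$, $[K,D]=0$, $[D,H]=\frac{1-e^{-\tau H}}{\tau}$, $[D,C_1]=-C_1+\tau\nu D^2$, $[H,C_1]=-2\nu D$, $[D,P]=P$, $[D,C_2]=-C_2$, $[P,C_2]=2\mu D$, $[K,C_1]=\nu C_2$, $[K,C_2]=\mu C_1-\tau\mu\nu D^2$, $[H,C_2]=e^{-\tau H}K+Ke^{-\tau H}$, $[P,C_1]=-2K-\tau\nu(DP+PD)$, $[C_1,C_2]=-\tau\nu(DC_2+C_2D)$. Its coproduct $\Delta$ is the algebra homomorphism determined by $\Delta(H)=1\otimes H+H\otimes 1$, $\Delta(D)=1\otimes D+D\otimes e^{-\tau H}$, $\Delta(P)=1\otimes P+P\otimes e^{\tau H}$, $\Delta(C_1)=1\otimes C_1+C_1\otimes e^{-\tau H}$, $\Delta(K)=1\otimes K+K\otimes 1-\tau\nu D\otimes e^{-\tau H}P$, $\Delta(C_2)=1\otimes C_2+C_2\otimes e^{-\tau H}+2\tau D\otimes e^{-\tau H}K-\tau^2\nu(D^2+D)\otimes e^{-2\tau H}P$. Note $1+\tau\mathcal H=e^{\tau H}$ is invertible; exponentials are power series in $\tau$. *)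

theory Defs
  imports Complex_Main
begin

definition comm :: "'a::ring \<Rightarrow> 'a \<Rightarrow> 'a" where
  "comm x y = x * y - y * x"

definition tadic_lim :: "'a::ring_1 \<Rightarrow> (nat \<Rightarrow> 'a) \<Rightarrow> 'a \<Rightarrow> bool" where
  "tadic_lim t a s \<longleftrightarrow> (\<forall>N. \<exists>r. s - (\<Sum>n<N. t ^ n * a n) = t ^ N * r)"

text \<open>t is central and the algebra is t-adically complete and separated
  (every series sum_n t^n a_n has a unique t-adic limit).\<close>
definition tadic_complete :: "'a::ring_1 \<Rightarrow> bool" where
  "tadic_complete t \<longleftrightarrow> (\<forall>x. t * x = x * t) \<and> (\<forall>a. \<exists>!s. tadic_lim t a s)"

definition tad_sum :: "'a::ring_1 \<Rightarrow> (nat \<Rightarrow> 'a) \<Rightarrow> 'a" where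
  "tad_sum t a = (THE s. tadic_lim t a s)"

definition texp :: "'a::real_algebra_1 \<Rightarrow> 'a \<Rightarrow> 'a" where
  "texp t x = tad_sum t (\<lambda>n. inverse (fact n) *\<^sub>R x ^ n)"

text \<open>tdexp t x = (e^{tau x} - 1)/tau = sum_n tau^n x^(n+1) / (n+1)!\<close>
definition tdexp :: "'a::real_algebra_1 \<Rightarrow> 'a \<Rightarrow> 'a" where
  "tdexp t x = tad_sum t (\<lambda>n. inverse (fact (Suc n)) *\<^sub>R x ^ Suc n)"

definition rinv :: "'a::ring_1 \<Rightarrow> 'a" where
  "rinv x = (THE y. x * y = 1 \<and> y * x = 1)"

text \<open>Unital R-algebra homomorphism mapping the deformation parameter t to s
  (hence R[tau]-linear; t-adic continuity is then automatic).\<close>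
definition talg_hom :: "'a::real_algebra_1 \<Rightarrow> 'b::real_algebra_1 \<Rightarrow> ('a \<Rightarrow> 'b) \<Rightarrow> bool" where
  "talg_hom t s f \<longleftrightarrow> f 1 = 1 \<and> (\<forall>x y. f (x + y) = f x + f y) \<and> (\<forall>x y. f (x * y) = f x * f y)
     \<and> (\<forall>c x. f (c *\<^sub>R x) = c *\<^sub>R f x) \<and> f t = s"

end

theory Submission
  imports Defs
begin

text \<open>With \<open>\<H> = (exp(\<tau>H) - 1)/\<tau>\<close> the deformation of \<open>U\<^sub>\<tau>(so\<^sub>\<mu>\<^sub>,\<^sub>\<nu>(2,2))\<close>
  is carried entirely by functions of \<open>H\<close>, so the theorem reduces to a small calculus of the
  \<open>\<tau>\<close>-adic exponential series. For commuting \<open>x, y\<close> the Cauchy product gives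
  \<open>exp(\<tau>(x + y)) = exp(\<tau>x) exp(\<tau>y)\<close>, so \<open>exp(-\<tau>H)\<close> inverts \<open>1 + \<tau>\<H>\<close>.
  Commutators with exponentials obey Leibniz rules: if \<open>[c,x] = y\<close> commutes with \<open>x\<close> then
  \<open>[c, (exp(\<tau>x) - 1)/\<tau>] = exp(\<tau>x) y\<close>, and if merely \<open>[[x,c],x]\<close> commutes with \<open>x\<close> then
  \<open>[(exp(\<tau>x) - 1)/\<tau>, c]\<close> is the symmetrised product \<open>(exp(\<tau>x) z + z exp(\<tau>x))/2\<close> with
  \<open>z = [x,c]\<close>. Each undeformed relation is a short computation with these rules, and the
  coproducts follow by pushing the exponentials through the homomorphisms \<open>\<Delta>\<close>,
  \<open>x \<mapsto> x \<otimes> 1\<close> and \<open>x \<mapsto> 1 \<otimes> x\<close>.\<close>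

section \<open>\<open>\<tau>\<close>-adic series\<close>

lemma tadic_complete_central: "tadic_complete t \<Longrightarrow> t * x = x * t"
  unfolding tadic_complete_def by blast

lemma tadic_lim_tad_sum: "tadic_complete t \<Longrightarrow> tadic_lim t a (tad_sum t a)"
  unfolding tadic_complete_def tad_sum_def by (metis theI')

lemma tad_sum_eqI: "tadic_complete t \<Longrightarrow> tadic_lim t a x \<Longrightarrow> tad_sum t a = x"
  unfolding tadic_complete_def tad_sum_def by (metis the1_equality)

lemma tadic_lim_map:
  fixes L :: "'a::ring_1 \<Rightarrow> 'b::ring_1"
  assumes "additive L" and L_t: "\<And>x. L (t * x) = s * L x" and "tadic_lim t a A"
  shows "tadic_lim s (\<lambda>n. L (a n)) (L A)"
  unfolding tadic_lim_def
proof
  fix N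
  have L_power: "L (t ^ n * x) = s ^ n * L x" for n x
    by (induction n arbitrary: x) (simp_all add: L_t mult.assoc)
  obtain r where "A - (\<Sum>n<N. t ^ n * a n) = t ^ N * r"
    using \<open>tadic_lim t a A\<close> unfolding tadic_lim_def by blast
  then have "L (A - (\<Sum>n<N. t ^ n * a n)) = s ^ N * L r"
    by (simp add: L_power)
  then have "L A - (\<Sum>n<N. s ^ n * L (a n)) = s ^ N * L r"
    by (simp add: additive.diff[OF \<open>additive L\<close>] additive.sum[OF \<open>additive L\<close>] L_power)
  then show "\<exists>r. L A - (\<Sum>n<N. s ^ n * L (a n)) = s ^ N * r" ..
qed

lemma tadic_lim_add:
  assumes "tadic_lim t a A" "tadic_lim t b B"
  shows "tadic_lim t (\<lambda>n. a n + b n) (A + B)"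
  unfolding tadic_lim_def
proof
  fix N
  obtain r r' where "A - (\<Sum>n<N. t ^ n * a n) = t ^ N * r"
    and "B - (\<Sum>n<N. t ^ n * b n) = t ^ N * r'"
    using assms unfolding tadic_lim_def by blast
  then have "A + B - (\<Sum>n<N. t ^ n * (a n + b n)) = t ^ N * (r + r')"
    by (simp add: distrib_left sum.distrib algebra_simps)
  then show "\<exists>r. A + B - (\<Sum>n<N. t ^ n * (a n + b n)) = t ^ N * r" ..
qed

lemma tadic_lim_zero: "tadic_lim t (\<lambda>n. 0) 0"
  unfolding tadic_lim_def by (intro allI exI[of _ 0]) simp

lemma tadic_lim_case_nat:
  assumes "tadic_lim t a A"
  shows "tadic_lim t (case_nat c a) (c + t * A)"
  unfolding tadic_lim_def
proof
  fix N
  show "\<exists>r. c + t * A - (\<Sum>n<N. t ^ n * case_nat c a n) = t ^ N * r"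
  proof (cases N)
    case 0
    then show ?thesis by simp
  next
    case (Suc M)
    obtain r where r: "A - (\<Sum>n<M. t ^ n * a n) = t ^ M * r"
      using assms unfolding tadic_lim_def by blast
    have "(\<Sum>n<N. t ^ n * case_nat c a n) = c + t * (\<Sum>n<M. t ^ n * a n)"
      unfolding Suc sum.lessThan_Suc_shift by (simp add: sum_distrib_left mult.assoc)
    then have "c + t * A - (\<Sum>n<N. t ^ n * case_nat c a n) = t ^ N * r"
      using Suc by (simp add: right_diff_distrib mult.assoc flip: r)
    then show ?thesis ..
  qed
qed

lemma sum_cauchy_product_partial:
  fixes t :: "'a::ring_1"
  assumes t_central: "\<And>x. t * x = x * t"
  shows "(\<Sum>n<N. t ^ n * (\<Sum>i\<le>n. a i * b (n - i)))
       = (\<Sum>i<N. t ^ i * a i * (\<Sum>j<N - i. t ^ j * b j))"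
proof -
  have t_power: "t ^ n * x = x * t ^ n" for n x
    by (metis power_commuting_commutes t_central)
  have "t ^ n * (a i * b (n - i)) = t ^ i * a i * (t ^ (n - i) * b (n - i))" if "i \<le> n" for i n
    using that by (simp add: mult.assoc t_power flip: power_add)
  then have "(\<Sum>n<N. t ^ n * (\<Sum>i\<le>n. a i * b (n - i)))
      = (\<Sum>n<N. \<Sum>i\<le>n. t ^ i * a i * (t ^ (n - i) * b (n - i)))"
    by (simp add: sum_distrib_left)
  also have "\<dots> = (\<Sum>(i, j)\<in>{(i, j). i + j < N}. t ^ i * a i * (t ^ j * b j))"
    by (rule sum.triangle_reindex[symmetric])
  also have "{(i, j). i + j < N} = (SIGMA i:{..<N}. {..<N - i})"
    by auto
  also have "(\<Sum>(i, j)\<in>\<dots>. t ^ i * a i * (t ^ j * b j))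
      = (\<Sum>i<N. t ^ i * a i * (\<Sum>j<N - i. t ^ j * b j))"
    by (simp add: sum.Sigma[symmetric] sum_distrib_left)
  finally show ?thesis .
qed

lemma tadic_lim_cauchy_product:
  fixes t :: "'a::ring_1"
  assumes t_central: "\<And>x. t * x = x * t" and "tadic_lim t a A" and "tadic_lim t b B"
  shows "tadic_lim t (\<lambda>n. \<Sum>i\<le>n. a i * b (n - i)) (A * B)"
  unfolding tadic_lim_def
proof
  fix N
  have t_power: "t ^ n * x = x * t ^ n" for n x
    by (metis power_commuting_commutes t_central)
  obtain rA where rA: "A - (\<Sum>n<N. t ^ n * a n) = t ^ N * rA"
    using \<open>tadic_lim t a A\<close> unfolding tadic_lim_def by blast
  have "\<forall>M. \<exists>r. B - (\<Sum>n<M. t ^ n * b n) = t ^ M * r"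
    using \<open>tadic_lim t b B\<close> unfolding tadic_lim_def by blast
  then obtain rB where rB: "\<And>M. B - (\<Sum>n<M. t ^ n * b n) = t ^ M * rB M"
    by metis
  have tail: "t ^ i * a i * (B - (\<Sum>j<N - i. t ^ j * b j)) = t ^ N * (a i * rB (N - i))"
    if "i < N" for i
  proof -
    have "t ^ i * a i * (t ^ (N - i) * r) = t ^ (i + (N - i)) * (a i * r)" for r
      by (simp add: power_add mult.assoc) (metis mult.assoc t_power)
    then show ?thesis
      using that by (simp add: rB)
  qed
  have "A * B - (\<Sum>n<N. t ^ n * (\<Sum>i\<le>n. a i * b (n - i)))
     = (A - (\<Sum>n<N. t ^ n * a n)) * B
       + (\<Sum>i<N. t ^ i * a i * (B - (\<Sum>j<N - i. t ^ j * b j)))"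
    unfolding sum_cauchy_product_partial[OF t_central]
    by (simp add: left_diff_distrib right_diff_distrib sum_distrib_right sum_subtractf)
  also have "\<dots> = t ^ N * rA * B + (\<Sum>i<N. t ^ N * (a i * rB (N - i)))"
    by (simp add: rA tail)
  also have "\<dots> = t ^ N * (rA * B + (\<Sum>i<N. a i * rB (N - i)))"
    by (simp add: distrib_left sum_distrib_left mult.assoc)
  finally show "\<exists>r. A * B - (\<Sum>n<N. t ^ n * (\<Sum>i\<le>n. a i * b (n - i))) = t ^ N * r" ..
qed

lemma tad_sum_map:
  fixes L :: "'a::ring_1 \<Rightarrow> 'b::ring_1"
  assumes "tadic_complete t" "tadic_complete s" "additive L" "\<And>x. L (t * x) = s * L x"
  shows "L (tad_sum t a) = tad_sum s (\<lambda>n. L (a n))"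
  using tadic_lim_map[OF assms(3,4) tadic_lim_tad_sum[OF assms(1)]]
  by (rule tad_sum_eqI[OF assms(2), symmetric])

lemma tad_sum_mult_right:
  "tadic_complete t \<Longrightarrow> tad_sum t a * y = tad_sum t (\<lambda>n. a n * y)"
  by (rule tad_sum_map) (simp_all add: additive_def distrib_right mult.assoc)

lemma tad_sum_add:
  "tadic_complete t \<Longrightarrow> tad_sum t (\<lambda>n. a n + b n) = tad_sum t a + tad_sum t b"
  by (simp add: tad_sum_eqI tadic_lim_add tadic_lim_tad_sum)

lemma tad_sum_zero: "tadic_complete t \<Longrightarrow> tad_sum t (\<lambda>n. 0) = 0"
  by (simp add: tad_sum_eqI tadic_lim_zero)

lemma tad_sum_case_nat:
  "tadic_complete t \<Longrightarrow> tad_sum t (case_nat c a) = c + t * tad_sum t a"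
  by (simp add: tad_sum_eqI tadic_lim_case_nat tadic_lim_tad_sum)

lemma tad_sum_cauchy_product:
  "tadic_complete t \<Longrightarrow> tad_sum t (\<lambda>n. \<Sum>i\<le>n. a i * b (n - i)) = tad_sum t a * tad_sum t b"
  by (simp add: tad_sum_eqI tadic_lim_cauchy_product tadic_lim_tad_sum tadic_complete_central)

section \<open>The exponential series\<close>

definition exp_term :: "'a::real_algebra_1 \<Rightarrow> nat \<Rightarrow> 'a" where
  "exp_term x n = inverse (fact n) *\<^sub>R x ^ n"

lemma texp_eq_tad_sum: "texp t x = tad_sum t (exp_term x)"
  unfolding texp_def exp_term_def ..

lemma tdexp_eq_tad_sum: "tdexp t x = tad_sum t (\<lambda>n. exp_term x (Suc n))"
  unfolding tdexp_def exp_term_def ..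

lemma exp_term_0 [simp]: "exp_term x 0 = 1"
  by (simp add: exp_term_def)

lemma exp_term_zero_Suc [simp]: "exp_term 0 (Suc n) = 0"
  by (simp add: exp_term_def)

lemma mult_exp_term: "x * exp_term x n = real (Suc n) *\<^sub>R exp_term x (Suc n)"
  by (simp add: exp_term_def field_simps del: of_nat_Suc)

lemma exp_term_commute:
  fixes x y :: "'a::real_algebra_1"
  assumes "y * x = x * y"
  shows "y * exp_term x n = exp_term x n * y"
  by (simp add: exp_term_def power_commuting_commutes[OF assms[symmetric]])

lemma exp_term_add_commuting:
  fixes x y :: "'a::real_algebra_1"
  assumes xy: "x * y = y * x"
  shows "exp_term (x + y) n = (\<Sum>i\<le>n. exp_term x i * exp_term y (n - i))"
proof (induction n)
  case 0
  then show ?case by simp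
next
  case (Suc n)
  let ?S = "\<lambda>i. exp_term x i * exp_term y (Suc n - i)"
  have y_left: "y * (exp_term x i * z) = exp_term x i * (y * z)" for i z
    by (metis mult.assoc exp_term_commute xy)
  have "real (Suc n) *\<^sub>R exp_term (x + y) (Suc n)
      = (x + y) * (\<Sum>i\<le>n. exp_term x i * exp_term y (n - i))"
    by (simp only: Suc.IH flip: mult_exp_term)
  also have "\<dots> = (\<Sum>i\<le>n. x * exp_term x i * exp_term y (n - i))
      + (\<Sum>i\<le>n. exp_term x i * (y * exp_term y (n - i)))"
    by (simp add: distrib_right sum_distrib_left sum.distrib mult.assoc y_left)
  also have "\<dots> = (\<Sum>i\<le>n. real (Suc i) *\<^sub>R ?S (Suc i)) + (\<Sum>i\<le>n. real (Suc n - i) *\<^sub>R ?S i)"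
    by (simp add: mult_exp_term Suc_diff_le)
  also have "\<dots> = (\<Sum>i\<le>Suc n. real i *\<^sub>R ?S i) + (\<Sum>i\<le>Suc n. real (Suc n - i) *\<^sub>R ?S i)"
    unfolding sum.atMost_Suc_shift[of "\<lambda>i. real i *\<^sub>R ?S i"]
      sum.atMost_Suc[of "\<lambda>i. real (Suc n - i) *\<^sub>R ?S i"]
    by simp
  also have "\<dots> = (\<Sum>i\<le>Suc n. real (Suc n) *\<^sub>R ?S i)"
    by (simp only: flip: sum.distrib scaleR_add_left) (rule sum.cong, simp_all flip: of_nat_add)
  also have "\<dots> = real (Suc n) *\<^sub>R (\<Sum>i\<le>Suc n. ?S i)"
    by (simp only: scaleR_right.sum)
  finally show ?case
    by (simp del: of_nat_Suc)
qed

lemma texp_eq_1_plus_tdexp: "tadic_complete t \<Longrightarrow> texp t x = 1 + t * tdexp t x"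
proof -
  assume "tadic_complete t"
  moreover have "exp_term x = case_nat 1 (\<lambda>n. exp_term x (Suc n))"
    by (auto split: nat.split)
  ultimately show ?thesis
    by (metis tad_sum_case_nat tdexp_eq_tad_sum texp_eq_tad_sum)
qed

lemma tdexp_zero: "tadic_complete t \<Longrightarrow> tdexp t 0 = 0"
  by (simp add: tdexp_eq_tad_sum tad_sum_zero)

lemma texp_zero: "tadic_complete t \<Longrightarrow> texp t 0 = 1"
  by (simp add: texp_eq_1_plus_tdexp tdexp_zero)

lemma texp_add_commuting:
  assumes "tadic_complete t" and "x * y = y * x"
  shows "texp t (x + y) = texp t x * texp t y"
proof -
  have "exp_term (x + y) = (\<lambda>n. \<Sum>i\<le>n. exp_term x i * exp_term y (n - i))"
    using exp_term_add_commuting[OF assms(2)] by blast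
  then show ?thesis
    by (simp add: texp_eq_tad_sum tad_sum_cauchy_product[OF assms(1)])
qed

lemma tdexp_add_commuting:
  fixes x y :: "'a::real_algebra_1"
  assumes c: "tadic_complete t" and xy: "x * y = y * x"
  shows "tdexp t (x + y) = tdexp t x + texp t x * tdexp t y"
proof -
  have "exp_term (x + y) (Suc n)
      = exp_term x (Suc n) + (\<Sum>i\<le>n. exp_term x i * exp_term y (Suc (n - i)))" for n
    by (simp add: exp_term_add_commuting[OF xy] Suc_diff_le)
  then show ?thesis
    by (simp add: tdexp_eq_tad_sum texp_eq_tad_sum tad_sum_add[OF c]
        tad_sum_cauchy_product[OF c, of "exp_term x" "\<lambda>n. exp_term y (Suc n)", symmetric])
qed

lemma texp_minus_inverse:
  assumes "tadic_complete t"
  shows "texp t x * texp t (- x) = 1" "texp t (- x) * texp t x = 1"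
  using texp_add_commuting[OF assms, of x "- x"] texp_add_commuting[OF assms, of "- x" x]
  by (simp_all add: texp_zero[OF assms])

section \<open>Commutators\<close>

lemma comm_self [simp]: "comm x x = 0"
  by (simp add: comm_def)

lemma comm_one_right [simp]: "comm x (1::'a::ring_1) = 0"
  by (simp add: comm_def)

lemma comm_swap: "comm x y = - comm y x"
  by (simp add: comm_def)

lemma comm_eq_0_iff: "comm x y = 0 \<longleftrightarrow> x * y = y * x"
  by (simp add: comm_def)

lemma additive_comm_right: "additive (comm c)"
  by (simp add: additive_def comm_def algebra_simps)

lemma additive_comm_left: "additive (\<lambda>x. comm x c)"
  by (simp add: additive_def comm_def algebra_simps)

lemmas comm_add_right = additive.add[OF additive_comm_right]
lemmas comm_add_left = additive.add[OF additive_comm_left]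
lemmas comm_diff_right = additive.diff[OF additive_comm_right]
lemmas comm_diff_left = additive.diff[OF additive_comm_left]
lemmas comm_minus_right = additive.minus[OF additive_comm_right]
lemmas comm_minus_left = additive.minus[OF additive_comm_left]

lemma comm_scaleR_right: "comm c (r *\<^sub>R x) = r *\<^sub>R comm c x"
  and comm_scaleR_left: "comm (r *\<^sub>R x) c = r *\<^sub>R comm x c"
  for c x :: "'a::real_algebra_1"
  by (simp_all add: comm_def scaleR_right_diff_distrib)

lemma comm_mult_right: "comm c (x * y) = comm c x * y + x * comm c y"
  and comm_mult_left: "comm (x * y) c = x * comm y c + comm x c * y"
  by (simp_all add: comm_def algebra_simps)

lemma comm_power2_right: "comm c (x ^ 2) = comm c x * x + x * comm c (x::'a::ring_1)"
  by (simp add: power2_eq_square comm_mult_right)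

lemma comm_power2_left: "comm (x ^ 2) c = x * comm x c + comm x c * (x::'a::ring_1)"
  by (simp add: power2_eq_square comm_mult_left)

lemma comm_central_mult_right: "(\<And>x. t * x = x * t) \<Longrightarrow> comm c (t * x) = t * comm c x"
  and comm_central_mult_left: "(\<And>x. t * x = x * t) \<Longrightarrow> comm (t * x) c = t * comm x c"
  by (simp_all add: comm_def right_diff_distrib mult.assoc)

lemma comm_power_Suc_right:
  fixes c x y :: "'a::real_algebra_1"
  assumes cxy: "comm c x = y" and xy: "x * y = y * x"
  shows "comm c (x ^ Suc n) = real (Suc n) *\<^sub>R (x ^ n * y)"
proof (induction n)
  case 0
  then show ?case using cxy by simp
next
  case (Suc n)
  have "comm c (x ^ Suc (Suc n)) = y * x ^ Suc n + real (Suc n) *\<^sub>R (x * x ^ n * y)"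
    by (simp only: power_Suc[of x "Suc n"] comm_mult_right cxy Suc.IH mult_scaleR_right
        mult.assoc)
  also have "\<dots> = real (Suc (Suc n)) *\<^sub>R (x ^ Suc n * y)"
    using power_commuting_commutes[OF xy, of "Suc n"] by (simp add: algebra_simps scaleR_2)
  finally show ?case .
qed

lemma comm_power_Suc_left_symmetric:
  fixes x c z :: "'a::real_algebra_1"
  assumes xcz: "comm x c = z" and xw: "x * comm z x = comm z x * x"
  shows "2 *\<^sub>R comm (x ^ Suc n) c = real (Suc n) *\<^sub>R (x ^ n * z + z * x ^ n)"
proof (induction n)
  case 0
  then show ?case using xcz by (simp add: scaleR_2)
next
  case (Suc n)
  define w where "w = comm z x"
  have zxn: "z * x ^ Suc n - x ^ Suc n * z = real (Suc n) *\<^sub>R (x ^ n * w)"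
    using comm_power_Suc_right[OF w_def[symmetric] xw[folded w_def]] by (simp add: comm_def)
  have "x * z = z * x - w" and "w * x ^ n = x ^ n * w"
    using power_commuting_commutes[OF xw[folded w_def]] by (simp_all add: w_def comm_def)
  then have xz: "x * (z * x ^ n) = z * x ^ Suc n - x ^ n * w"
    by (simp add: left_diff_distrib mult.assoc flip: mult.assoc[of x z])
  have "2 *\<^sub>R comm (x ^ Suc (Suc n)) c
      = x * (2 *\<^sub>R comm (x ^ Suc n) c) + 2 *\<^sub>R (z * x ^ Suc n)"
    by (simp only: power_Suc[of x "Suc n"] comm_mult_left xcz scaleR_right_distrib
        mult_scaleR_right)
  also have "\<dots> = real (Suc n) *\<^sub>R (x * (x ^ n * z) + x * (z * x ^ n))
      + 2 *\<^sub>R (z * x ^ Suc n)"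
    by (simp only: Suc.IH mult_scaleR_right distrib_left)
  also have "\<dots> = real (Suc n) *\<^sub>R (x ^ Suc n * z + z * x ^ Suc n - x ^ n * w)
      + 2 *\<^sub>R (z * x ^ Suc n)"
    unfolding xz by (simp add: algebra_simps)
  also have "\<dots> = real (Suc (Suc n)) *\<^sub>R (x ^ Suc n * z + z * x ^ Suc n)"
    using zxn by (simp add: algebra_simps scaleR_2)
  finally show ?case .
qed

lemma comm_tad_sum_right:
  "tadic_complete t \<Longrightarrow> comm c (tad_sum t a) = tad_sum t (\<lambda>n. comm c (a n))"
  by (rule tad_sum_map[OF _ _ additive_comm_right])
    (metis comm_central_mult_right tadic_complete_central)+

lemma comm_tad_sum_left:
  "tadic_complete t \<Longrightarrow> comm (tad_sum t a) c = tad_sum t (\<lambda>n. comm (a n) c)"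
  by (rule tad_sum_map[OF _ _ additive_comm_left])
    (metis comm_central_mult_left tadic_complete_central)+

lemma inverse_fact_Suc_mult: "inverse (fact (Suc n)) * real (Suc n) = inverse (fact n)"
  by (simp del: of_nat_Suc)

lemma comm_exp_term_Suc_right:
  assumes "comm c x = y" and "x * y = y * x"
  shows "comm c (exp_term x (Suc n)) = exp_term x n * y"
  using inverse_fact_Suc_mult[of n]
  by (simp add: exp_term_def comm_scaleR_right comm_power_Suc_right[OF assms]
      del: of_nat_Suc fact_Suc power_Suc)

lemma comm_tdexp_right:
  assumes "tadic_complete t" and "comm c x = y" and "x * y = y * x"
  shows "comm c (tdexp t x) = texp t x * y"
  using assms
  by (simp add: tdexp_eq_tad_sum texp_eq_tad_sum comm_tad_sum_right comm_exp_term_Suc_right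
      tad_sum_mult_right)

lemma comm_texp_right:
  assumes "tadic_complete t" and "comm c x = y" and "x * y = y * x"
  shows "comm c (texp t x) = t * (texp t x * y)"
  using assms
  by (simp add: texp_eq_1_plus_tdexp[of t x] comm_add_right comm_central_mult_right
      tadic_complete_central comm_tdexp_right)

lemma texp_commute:
  "tadic_complete t \<Longrightarrow> y * x = x * y \<Longrightarrow> y * texp t x = texp t x * y"
  using comm_texp_right[of t y x 0] by (simp add: comm_eq_0_iff)

lemma tdexp_commute:
  "tadic_complete t \<Longrightarrow> y * x = x * y \<Longrightarrow> y * tdexp t x = tdexp t x * y"
  using comm_tdexp_right[of t y x 0] by (simp add: comm_eq_0_iff)

lemma comm_exp_term_Suc_left:
  assumes "comm x c = z" and "x * comm z x = comm z x * x"
  shows "comm (exp_term x (Suc n)) c = (1/2) *\<^sub>R (exp_term x n * z + z * exp_term x n)"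
proof -
  have "comm (x ^ Suc n) c = (1/2) *\<^sub>R (real (Suc n) *\<^sub>R (x ^ n * z + z * x ^ n))"
    using comm_power_Suc_left_symmetric[OF assms, of n, symmetric] by simp
  then show ?thesis
    using inverse_fact_Suc_mult[of n]
    by (simp add: exp_term_def comm_scaleR_left scaleR_right_distrib
        del: of_nat_Suc fact_Suc power_Suc)
qed

lemma comm_tdexp_left:
  assumes c: "tadic_complete t" and "comm x c = z" and "x * comm z x = comm z x * x"
  shows "comm (tdexp t x) c = (1/2) *\<^sub>R (texp t x * z + z * texp t x)"
proof -
  let ?L = "\<lambda>w. (1/2) *\<^sub>R (w * z + z * w)"
  have "?L (tad_sum t (exp_term x)) = tad_sum t (\<lambda>n. ?L (exp_term x n))"
  proof (rule tad_sum_map[OF c c])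
    show "additive ?L"
      by (simp add: additive_def algebra_simps)
    show "?L (t * w) = t * ?L w" for w
      by (simp add: algebra_simps) (metis mult.assoc tadic_complete_central[OF c])
  qed
  then show ?thesis
    by (simp add: tdexp_eq_tad_sum texp_eq_tad_sum comm_tad_sum_left[OF c]
        comm_exp_term_Suc_left[OF assms(2,3)])
qed

section \<open>Homomorphisms of \<open>\<tau>\<close>-adic algebras\<close>

lemma talg_hom_simps:
  assumes "talg_hom t s f"
  shows "f 1 = 1" "f (x + y) = f x + f y" "f (x * y) = f x * f y" "f (c *\<^sub>R x) = c *\<^sub>R f x"
    "f t = s" "f 0 = 0" "f (- x) = - f x" "f (x - y) = f x - f y" "f (x ^ n) = f x ^ n"
proof -
  have "additive f"
    using assms by (simp add: talg_hom_def additive_def)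
  then show "f 0 = 0" "f (- x) = - f x" "f (x - y) = f x - f y"
    by (simp_all add: additive.zero additive.minus additive.diff)
  show "f 1 = 1" "f (x + y) = f x + f y" "f (x * y) = f x * f y"
    "f (c *\<^sub>R x) = c *\<^sub>R f x" "f t = s"
    using assms by (simp_all add: talg_hom_def)
  then show "f (x ^ n) = f x ^ n"
    using assms by (induction n) (simp_all add: talg_hom_def)
qed

lemma talg_hom_tad_sum:
  assumes "talg_hom t s f" "tadic_complete t" "tadic_complete s"
  shows "f (tad_sum t a) = tad_sum s (\<lambda>n. f (a n))"
  using assms by (intro tad_sum_map) (simp_all add: additive_def talg_hom_simps)

lemma talg_hom_exp_term: "talg_hom t s f \<Longrightarrow> f (exp_term x n) = exp_term (f x) n"
  by (simp add: exp_term_def talg_hom_simps)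

lemma talg_hom_texp:
  assumes "talg_hom t s f" "tadic_complete t" "tadic_complete s"
  shows "f (texp t x) = texp s (f x)"
  using assms by (simp add: texp_eq_tad_sum talg_hom_tad_sum talg_hom_exp_term)

lemma talg_hom_tdexp:
  assumes "talg_hom t s f" "tadic_complete t" "tadic_complete s"
  shows "f (tdexp t x) = tdexp s (f x)"
  using assms by (simp add: tdexp_eq_tad_sum talg_hom_tad_sum talg_hom_exp_term)

lemma rinv_unique: "x * y = 1 \<Longrightarrow> y * x = 1 \<Longrightarrow> rinv x = y"
  unfolding rinv_def by (rule the_equality) (auto, metis mult.assoc mult_1_left mult_1_right)

section \<open>The undeformed generators of \<open>U\<^sub>\<tau>(so\<^sub>\<mu>\<^sub>,\<^sub>\<nu>(2,2))\<close>\<close>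

locale deformed_so22 =
  fixes t H P K D C1 C2 :: "'a::real_algebra_1" and \<mu> \<nu> :: real
  assumes complete: "tadic_complete t"
    and comm_K_H: "comm K H = \<nu> *\<^sub>R (texp t (- H) * P)"
    and comm_K_P: "comm K P = \<mu> *\<^sub>R tdexp t H"
    and comm_H_P: "comm H P = 0"
    and comm_K_D: "comm K D = 0"
    and comm_D_H: "comm D H = - tdexp t (- H)"
    and comm_D_C1: "comm D C1 = - C1 + \<nu> *\<^sub>R (t * D ^ 2)"
    and comm_H_C1: "comm H C1 = - (2 * \<nu>) *\<^sub>R D"
    and comm_D_P: "comm D P = P"
    and comm_D_C2: "comm D C2 = - C2"
    and comm_P_C2: "comm P C2 = (2 * \<mu>) *\<^sub>R D"
    and comm_K_C1: "comm K C1 = \<nu> *\<^sub>R C2"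
    and comm_K_C2: "comm K C2 = \<mu> *\<^sub>R C1 - (\<mu> * \<nu>) *\<^sub>R (t * D ^ 2)"
    and comm_H_C2: "comm H C2 = texp t (- H) * K + K * texp t (- H)"
    and comm_P_C1: "comm P C1 = - 2 * K - \<nu> *\<^sub>R (t * (D * P + P * D))"
    and comm_C1_C2: "comm C1 C2 = - \<nu> *\<^sub>R (t * (D * C2 + C2 * D))"
begin

abbreviation "\<H> \<equiv> tdexp t H"
abbreviation "\<C>\<^sub>1 \<equiv> C1 - \<nu> *\<^sub>R (t * D ^ 2)"
abbreviation "E \<equiv> texp t H"
abbreviation "E' \<equiv> texp t (- H)"

lemma t_central: "t * x = x * t"
  by (rule tadic_complete_central[OF complete])

lemmas comm_t_mult_right = comm_central_mult_right[OF t_central]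
lemmas comm_t_mult_left = comm_central_mult_left[OF t_central]

lemma E_eq: "E = 1 + t * \<H>"
  by (rule texp_eq_1_plus_tdexp[OF complete])

lemma E_E': "E * E' = 1" and E'_E: "E' * E = 1"
  by (rule texp_minus_inverse[OF complete])+

lemma rinv_E: "rinv (1 + t * \<H>) = E'"
  using rinv_unique[OF E_E' E'_E] by (simp add: E_eq)

lemma rinv_E_square: "rinv ((1 + t * \<H>) ^ 2) = E' * E'"
proof (rule rinv_unique)
  show "(1 + t * \<H>) ^ 2 * (E' * E') = 1" "E' * E' * (1 + t * \<H>) ^ 2 = 1"
    unfolding E_eq[symmetric] power2_eq_square
    by (metis E_E' E'_E mult.assoc mult_1_left)+
qed

lemma texp_minus_double: "texp t (- (2 * H)) = E' * E'"
  using texp_add_commuting[OF complete, of "- H" "- H"] by (simp add: mult_2)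

lemma E_mult_tdexp_minus: "E * tdexp t (- H) = - \<H>"
  using tdexp_add_commuting[OF complete, of H "- H"]
  by (simp add: tdexp_zero[OF complete] add_eq_0_iff)

lemma H_E': "H * E' = E' * H"
  by (simp add: texp_commute[OF complete])

lemma H_tdexp_minus: "H * tdexp t (- H) = tdexp t (- H) * H"
  by (simp add: tdexp_commute[OF complete])

lemma P_H: "P * H = H * P"
  using comm_H_P by (simp add: comm_eq_0_iff)

lemma P_E': "P * E' = E' * P"
  by (simp add: texp_commute[OF complete] P_H)

lemma H_E'_P: "H * (\<nu> *\<^sub>R (E' * P)) = \<nu> *\<^sub>R (E' * P) * H"
  by (simp add: H_E' P_H flip: mult.assoc) (simp add: mult.assoc P_H)

lemma comm_K_\<H>: "comm K \<H> = \<nu> *\<^sub>R P"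
proof -
  from H_E'_P have "comm K \<H> = E * (\<nu> *\<^sub>R (E' * P))"
    by (rule comm_tdexp_right[OF complete comm_K_H])
  then show ?thesis
    by (simp add: E_E' flip: mult.assoc)
qed

lemma comm_\<H>_P: "comm \<H> P = 0"
  by (simp add: comm_eq_0_iff tdexp_commute[OF complete] P_H)

lemma comm_D_\<H>: "comm D \<H> = \<H>"
proof -
  have "H * - tdexp t (- H) = - tdexp t (- H) * H"
    by (simp add: H_tdexp_minus)
  then have "comm D \<H> = E * - tdexp t (- H)"
    by (rule comm_tdexp_right[OF complete comm_D_H])
  then show ?thesis
    by (simp add: E_mult_tdexp_minus)
qed

lemma comm_D_\<C>\<^sub>1: "comm D \<C>\<^sub>1 = - \<C>\<^sub>1"
  by (simp add: comm_diff_right comm_scaleR_right comm_t_mult_right comm_power2_right comm_D_C1)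

lemma comm_\<H>_D: "comm \<H> D = - \<H>"
  by (simp add: comm_swap[of \<H>] comm_D_\<H>)

lemma comm_\<H>_\<C>\<^sub>1: "comm \<H> \<C>\<^sub>1 = - (2 * \<nu>) *\<^sub>R D"
proof -
  let ?z = "- (2 * \<nu>) *\<^sub>R D"
  have "comm ?z H = (2 * \<nu>) *\<^sub>R tdexp t (- H)"
    by (simp add: comm_minus_left comm_scaleR_left comm_D_H)
  then have "H * comm ?z H = comm ?z H * H"
    by (simp add: H_tdexp_minus)
  then have "comm \<H> C1 = (1/2) *\<^sub>R (E * ?z + ?z * E)"
    by (rule comm_tdexp_left[OF complete comm_H_C1])
  also have "\<dots> = - \<nu> *\<^sub>R (E * D + D * E)"
    by (simp add: algebra_simps)
  finally have comm_\<H>_C1: "comm \<H> C1 = - \<nu> *\<^sub>R (E * D + D * E)" .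
  have "comm \<H> \<C>\<^sub>1 = comm \<H> C1 - \<nu> *\<^sub>R (t * comm \<H> (D ^ 2))"
    by (simp add: comm_diff_right comm_scaleR_right comm_t_mult_right)
  also have "\<dots> = - \<nu> *\<^sub>R (E * D + D * E) + \<nu> *\<^sub>R (t * (\<H> * D + D * \<H>))"
    by (simp add: comm_\<H>_C1 comm_power2_right comm_\<H>_D algebra_simps)
  also have "\<dots> = - \<nu> *\<^sub>R (D + D)"
    using mult.assoc[of D t \<H>] by (simp add: E_eq algebra_simps t_central[of D] flip: mult.assoc)
  also have "\<dots> = - (2 * \<nu>) *\<^sub>R D"
    by (simp add: scaleR_2 scaleR_right_distrib flip: scaleR_scaleR)
  finally show ?thesis .
qed

lemma comm_K_\<C>\<^sub>1: "comm K \<C>\<^sub>1 = \<nu> *\<^sub>R C2"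
  by (simp add: comm_diff_right comm_scaleR_right comm_t_mult_right comm_power2_right comm_K_D
      comm_K_C1)

lemma comm_K_C2_undeformed: "comm K C2 = \<mu> *\<^sub>R \<C>\<^sub>1"
  by (simp add: comm_K_C2 scaleR_right_diff_distrib)

lemma comm_P_\<C>\<^sub>1: "comm P \<C>\<^sub>1 = - 2 * K"
  by (simp add: comm_diff_right comm_scaleR_right comm_t_mult_right comm_power2_right comm_P_C1
      comm_swap[of P D] comm_D_P algebra_simps)

lemma comm_\<C>\<^sub>1_C2: "comm \<C>\<^sub>1 C2 = 0"
  by (simp add: comm_diff_left comm_scaleR_left comm_t_mult_left comm_power2_left comm_C1_C2
      comm_D_C2 algebra_simps)

lemma comm_K_E: "comm K E = \<nu> *\<^sub>R (t * P)"
proof -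
  have "comm K E = t * (E * (\<nu> *\<^sub>R (E' * P)))"
    by (rule comm_texp_right[OF complete comm_K_H H_E'_P])
  then show ?thesis
    by (simp add: E_E' flip: mult.assoc)
qed

lemma comm_\<H>_C2: "comm \<H> C2 = 2 * K"
proof -
  let ?z = "E' * K + K * E'"
  let ?y = "\<nu> *\<^sub>R (E' * P)"
  have "comm E' H = 0"
    by (simp add: comm_eq_0_iff H_E')
  then have "comm ?z H = E' * ?y + ?y * E'"
    by (simp add: comm_add_left comm_mult_left comm_K_H)
  moreover have "H * (E' * ?y) = E' * ?y * H" "H * (?y * E') = ?y * E' * H"
    by (metis H_E' H_E'_P mult.assoc)+
  ultimately have "H * comm ?z H = comm ?z H * H"
    by (simp only: distrib_left distrib_right)
  then have "comm \<H> C2 = (1/2) *\<^sub>R (E * ?z + ?z * E)"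
    by (rule comm_tdexp_left[OF complete comm_H_C2])
  also have "E * ?z + ?z * E = 2 *\<^sub>R (K + K)"
  proof -
    have EK: "E * K = K * E - \<nu> *\<^sub>R (t * P)"
      using comm_K_E by (simp add: comm_def algebra_simps)
    have EKE': "E * K * E' = K - \<nu> *\<^sub>R (t * (P * E'))"
      unfolding EK by (simp add: algebra_simps E_E')
    have "E' * K * E = E' * (E * K + \<nu> *\<^sub>R (t * P))"
      by (simp add: EK mult.assoc)
    also have "\<dots> = K + \<nu> *\<^sub>R (t * (E' * P))"
      by (simp add: distrib_left E'_E flip: mult.assoc) (metis mult.assoc t_central)
    finally have E'KE: "E' * K * E = K + \<nu> *\<^sub>R (t * (P * E'))"
      by (simp add: P_E')
    have "E * ?z + ?z * E = E * E' * K + E * K * E' + E' * K * E + K * (E' * E)"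
      by (simp add: algebra_simps)
    then show ?thesis
      by (simp add: EKE' E'KE E_E' E'_E scaleR_2)
  qed
  finally show ?thesis
    by (simp add: mult_2)
qed

lemma comm_D_E': "comm D E' = E' * E' - E'"
proof -
  have "comm D (- H) = tdexp t (- H)" and "- H * tdexp t (- H) = tdexp t (- H) * - H"
    by (simp_all add: comm_minus_right comm_D_H H_tdexp_minus)
  then have "comm D E' = t * (E' * tdexp t (- H))"
    by (rule comm_texp_right[OF complete])
  also have "\<dots> = E' * (E' - 1)"
    using texp_eq_1_plus_tdexp[OF complete, of "- H"]
    by (metis add_diff_cancel_left' mult.assoc t_central)
  finally show ?thesis
    by (simp add: right_diff_distrib)
qed

lemma t_\<H>_E'_square: "t * \<H> * (E' * E') = E' - E' * E'"
proof -
  have "t * \<H> = E - 1"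
    by (simp add: E_eq)
  then show ?thesis
    by (simp add: left_diff_distrib E_E' flip: mult.assoc)
qed

end

text \<open>\<open>i1 x\<close> and \<open>i2 x\<close> stand for \<open>x \<otimes> 1\<close> and \<open>1 \<otimes> x\<close>.\<close>

locale deformed_so22_coproduct = deformed_so22 t H P K D C1 C2 \<mu> \<nu>
  for t H P K D C1 C2 :: "'a::real_algebra_1" and \<mu> \<nu> :: real +
  fixes s :: "'b::real_algebra_1" and i1 i2 \<Delta> :: "'a \<Rightarrow> 'b"
  assumes complete_target: "tadic_complete s"
    and hom_i1: "talg_hom t s i1" and hom_i2: "talg_hom t s i2" and hom_\<Delta>: "talg_hom t s \<Delta>"
    and i1_i2_commute: "\<And>x y. i1 x * i2 y = i2 y * i1 x"
    and \<Delta>_H: "\<Delta> H = i2 H + i1 H"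
    and \<Delta>_D: "\<Delta> D = i2 D + i1 D * i2 (texp t (- H))"
    and \<Delta>_P: "\<Delta> P = i2 P + i1 P * i2 (texp t H)"
    and \<Delta>_C1: "\<Delta> C1 = i2 C1 + i1 C1 * i2 (texp t (- H))"
    and \<Delta>_K: "\<Delta> K = i2 K + i1 K - \<nu> *\<^sub>R (s * (i1 D * i2 (texp t (- H) * P)))"
    and \<Delta>_C2: "\<Delta> C2 = i2 C2 + i1 C2 * i2 (texp t (- H)) + 2 * s * (i1 D * i2 (texp t (- H) * K))
                - \<nu> *\<^sub>R (s ^ 2 * (i1 (D ^ 2 + D) * i2 (texp t (- (2 * H)) * P)))"
begin

lemma s_central: "s * x = x * s"
  by (rule tadic_complete_central[OF complete_target])

lemma i2_E: "i2 E = 1 + s * i2 \<H>"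
  by (simp add: E_eq talg_hom_simps[OF hom_i2])

lemma \<Delta>_\<H>: "\<Delta> \<H> = i2 \<H> + i1 \<H> + s * (i1 \<H> * i2 \<H>)"
proof -
  have "\<Delta> \<H> = tdexp s (i2 H + i1 H)"
    by (simp add: talg_hom_tdexp[OF hom_\<Delta> complete complete_target] \<Delta>_H)
  also have "\<dots> = i2 \<H> + i2 E * i1 \<H>"
    using tdexp_add_commuting[OF complete_target i1_i2_commute[symmetric]]
    by (simp add: talg_hom_tdexp[OF _ complete complete_target]
        talg_hom_texp[OF _ complete complete_target] hom_i1 hom_i2)
  finally show ?thesis
    by (simp add: i2_E algebra_simps i1_i2_commute)
qed

lemma \<Delta>_P_undeformed: "\<Delta> P = i2 P + i1 P + s * (i1 P * i2 \<H>)"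
  using \<Delta>_P by (simp add: i2_E algebra_simps) (metis mult.assoc s_central)

lemma \<Delta>_K_undeformed: "\<Delta> K = i2 K + i1 K - \<nu> *\<^sub>R (s * (i1 D * i2 (P * E')))"
  using \<Delta>_K by (simp add: P_E')

lemma \<Delta>_C2_undeformed:
  "\<Delta> C2 = i2 C2 + i1 C2 * i2 E' + 2 * s * (i1 D * i2 (E' * K))
     - \<nu> *\<^sub>R (s ^ 2 * (i1 (D ^ 2 + D) * i2 (P * (E' * E'))))"
proof -
  have "E' * E' * P = P * (E' * E')"
    by (metis P_E' mult.assoc)
  then show ?thesis
    using \<Delta>_C2 by (simp add: texp_minus_double)
qed

lemma \<Delta>_D_square:
  "\<Delta> D ^ 2 = i2 D ^ 2 + 2 *\<^sub>R (i1 D * (i2 E' * i2 D)) + i1 D ^ 2 * i2 E' ^ 2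
     + i1 D * (i2 E' * i2 E' - i2 E')"
proof -
  have "i2 D * i2 E' - i2 E' * i2 D = i2 E' * i2 E' - i2 E'"
    using arg_cong[OF comm_D_E', of i2] by (simp add: comm_def talg_hom_simps[OF hom_i2])
  then have d2_e: "i2 D * i2 E' = i2 E' * i2 D + (i2 E' * i2 E' - i2 E')"
    by (metis add.commute diff_add_cancel)
  have "i2 D * (i1 D * i2 E') = i1 D * (i2 D * i2 E')"
    by (metis mult.assoc i1_i2_commute)
  also have "\<dots> = i1 D * (i2 E' * i2 D) + i1 D * (i2 E' * i2 E' - i2 E')"
    by (simp only: d2_e distrib_left)
  finally have twist:
    "i2 D * (i1 D * i2 E') = i1 D * (i2 E' * i2 D) + i1 D * (i2 E' * i2 E' - i2 E')" .
  have "\<Delta> D ^ 2 = i2 D * i2 D + i2 D * (i1 D * i2 E') + i1 D * (i2 E' * i2 D)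
      + i1 D * (i2 E' * (i1 D * i2 E'))"
    by (simp add: \<Delta>_D power2_eq_square algebra_simps)
  also have "i2 E' * (i1 D * i2 E') = i1 D * (i2 E' * i2 E')"
    by (metis mult.assoc i1_i2_commute)
  finally show ?thesis
    by (simp add: twist power2_eq_square algebra_simps scaleR_2)
qed

lemma \<Delta>_\<C>\<^sub>1:
  "\<Delta> \<C>\<^sub>1 = i2 \<C>\<^sub>1 + i1 \<C>\<^sub>1 * i2 E' - (2 * \<nu>) *\<^sub>R (s * (i1 D * i2 (E' * D)))
     + \<nu> *\<^sub>R (s * (i1 (D ^ 2 + D) * i2 (t * \<H> * (E' * E'))))"
proof -
  have "\<Delta> \<C>\<^sub>1 = \<Delta> C1 - \<nu> *\<^sub>R (s * \<Delta> D ^ 2)"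
    by (simp add: talg_hom_simps[OF hom_\<Delta>])
  then show ?thesis
    unfolding t_\<H>_E'_square \<Delta>_D_square
    by (simp add: talg_hom_simps[OF hom_i1] talg_hom_simps[OF hom_i2] \<Delta>_C1 algebra_simps
        s_central power2_eq_square)
qed

end

theorem mainTheorem3:
  fixes t H P K D C1 C2 :: "'a::real_algebra_1" and \<mu> \<nu> :: real
    and s :: "'b::real_algebra_1" and i1 i2 \<Delta> :: "'a \<Rightarrow> 'b"
  assumes cA: "tadic_complete t" and cB: "tadic_complete s"
    and hi1: "talg_hom t s i1" and hi2: "talg_hom t s i2" and hD: "talg_hom t s \<Delta>"
    and i12: "\<And>x y. i1 x * i2 y = i2 y * i1 x"
    and r1: "comm K H = \<nu> *\<^sub>R (texp t (- H) * P)"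
    and r2: "comm K P = \<mu> *\<^sub>R tdexp t H"
    and r3: "comm H P = 0"
    and r4: "comm K D = 0"
    and r5: "comm D H = - tdexp t (- H)"
    and r6: "comm D C1 = - C1 + \<nu> *\<^sub>R (t * D ^ 2)"
    and r7: "comm H C1 = - (2 * \<nu>) *\<^sub>R D"
    and r8: "comm D P = P"
    and r9: "comm D C2 = - C2"
    and r10: "comm P C2 = (2 * \<mu>) *\<^sub>R D"
    and r11: "comm K C1 = \<nu> *\<^sub>R C2"
    and r12: "comm K C2 = \<mu> *\<^sub>R C1 - (\<mu> * \<nu>) *\<^sub>R (t * D ^ 2)"
    and r13: "comm H C2 = texp t (- H) * K + K * texp t (- H)"
    and r14: "comm P C1 = - 2 * K - \<nu> *\<^sub>R (t * (D * P + P * D))"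
    and r15: "comm C1 C2 = - \<nu> *\<^sub>R (t * (D * C2 + C2 * D))"
    and dH: "\<Delta> H = i2 H + i1 H"
    and dD: "\<Delta> D = i2 D + i1 D * i2 (texp t (- H))"
    and dP: "\<Delta> P = i2 P + i1 P * i2 (texp t H)"
    and dC1: "\<Delta> C1 = i2 C1 + i1 C1 * i2 (texp t (- H))"
    and dK: "\<Delta> K = i2 K + i1 K - \<nu> *\<^sub>R (s * (i1 D * i2 (texp t (- H) * P)))"
    and dC2: "\<Delta> C2 = i2 C2 + i1 C2 * i2 (texp t (- H)) + 2 * s * (i1 D * i2 (texp t (- H) * K))
                - \<nu> *\<^sub>R (s ^ 2 * (i1 (D ^ 2 + D) * i2 (texp t (- (2 * H)) * P)))"
  shows "let HH = tdexp t H; CC1 = C1 - \<nu> *\<^sub>R (t * D ^ 2);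
             Ri = rinv (1 + t * HH); Rsq = rinv ((1 + t * HH) ^ 2) in
     (\<exists>y. (1 + t * HH) * y = 1 \<and> y * (1 + t * HH) = 1) \<and>
     comm K HH = \<nu> *\<^sub>R P \<and> comm K P = \<mu> *\<^sub>R HH \<and> comm HH P = 0 \<and>
     comm D HH = HH \<and> comm D CC1 = - CC1 \<and> comm HH CC1 = - (2 * \<nu>) *\<^sub>R D \<and>
     comm D P = P \<and> comm D C2 = - C2 \<and> comm P C2 = (2 * \<mu>) *\<^sub>R D \<and>
     comm K CC1 = \<nu> *\<^sub>R C2 \<and> comm K C2 = \<mu> *\<^sub>R CC1 \<and> comm K D = 0 \<and>
     comm HH C2 = 2 * K \<and> comm P CC1 = - 2 * K \<and> comm CC1 C2 = 0 \<and>
     \<Delta> HH = i2 HH + i1 HH + s * (i1 HH * i2 HH) \<and>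
     \<Delta> P = i2 P + i1 P + s * (i1 P * i2 HH) \<and>
     \<Delta> D = i2 D + i1 D * i2 Ri \<and>
     \<Delta> K = i2 K + i1 K - \<nu> *\<^sub>R (s * (i1 D * i2 (P * Ri))) \<and>
     \<Delta> CC1 = i2 CC1 + i1 CC1 * i2 Ri - (2 * \<nu>) *\<^sub>R (s * (i1 D * i2 (Ri * D)))
              + \<nu> *\<^sub>R (s * (i1 (D ^ 2 + D) * i2 (t * HH * Rsq))) \<and>
     \<Delta> C2 = i2 C2 + i1 C2 * i2 Ri + 2 * s * (i1 D * i2 (Ri * K))
              - \<nu> *\<^sub>R (s ^ 2 * (i1 (D ^ 2 + D) * i2 (P * Rsq)))"
proof -
  interpret deformed_so22_coproduct t H P K D C1 C2 \<mu> \<nu> s i1 i2 \<Delta>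
    by unfold_locales (rule assms)+
  show ?thesis
    unfolding Let_def rinv_E rinv_E_square
    by (intro conjI exI[of _ E'] E_E'[unfolded E_eq] E'_E[unfolded E_eq]
        comm_K_\<H> comm_K_P comm_\<H>_P comm_D_\<H> comm_D_\<C>\<^sub>1 comm_\<H>_\<C>\<^sub>1
        comm_D_P comm_D_C2 comm_P_C2 comm_K_\<C>\<^sub>1 comm_K_C2_undeformed comm_K_D
        comm_\<H>_C2 comm_P_\<C>\<^sub>1 comm_\<C>\<^sub>1_C2
        \<Delta>_\<H> \<Delta>_P_undeformed \<Delta>_D \<Delta>_K_undeformed \<Delta>_\<C>\<^sub>1 \<Delta>_C2_undeformed)
qed

end
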